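(* Let $R$ be any BST on $[n]$ (the reference tree). Assign to every BST $T$ on $[n]$ the potential $\phi_R(T)=\sum_{i=1}^n\bigl(-2\min_{j\in T(i)} d_R(j)\bigr)$, where $T(i)$ is the set of keys in the subtree of $T$ rooted at $i$ and $d_R(j)$ is the depth of $j$ in $R$ (root at depth $0$). There is an absolute constant $c$ such that for every BST $T$ on $[n]$ and every key $i$, if splaying $i$ transforms $T$ into $T'$, then $\mathrm{cost}+\phi_R(T')-\phi_R(T)\le c\,(1+d_R(i))$.
   Context: Splaying a key $i$ (Sleator–Tarjan splay tree) brings $i$ to the root by a sequence of zig-zig and zig-zag steps, each consisting of two rotations, possibly followed by one final zig step consisting of a single rotation. Each zig-zig or zig-zag step costs $2$ and a zig step costs $1$. Here $\mathrm{cost}$ denotes the total cost of the splay of $i$ in $T$, i.e. the number of rotations performed, which equals the depth of $i$ in $T$. *)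

theory Defs
  imports Complex_Main "HOL-Library.Tree"
begin

fun dep :: "nat tree \<Rightarrow> nat \<Rightarrow> nat" where
  "dep Leaf x = 0"
| "dep (Node l a r) x =
     (if x < a then Suc (dep l x) else if a < x then Suc (dep r x) else 0)"

fun subtr :: "nat tree \<Rightarrow> nat \<Rightarrow> nat tree" where
  "subtr Leaf x = Leaf"
| "subtr (Node l a r) x =
     (if x < a then subtr l x else if a < x then subtr r x else Node l a r)"

text \<open>Splay for keys at even depth: a sequence of zig-zig / zig-zag steps
  (bottom-up pairs align with the root when the depth is even).\<close>
fun splay_even :: "nat \<Rightarrow> nat tree \<Rightarrow> nat tree" where
  "splay_even x Leaf = Leaf"
| "splay_even x (Node l a r) =
    (if x = a then Node l a r
     else if x < a then
       (case l of Leaf \<Rightarrow> Node l a r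
        | Node ll b lr \<Rightarrow>
           (if x = b then Node l a r
            else if x < b then
              (case splay_even x ll of Leaf \<Rightarrow> Node l a r
               | Node A y B \<Rightarrow> Node A y (Node B b (Node lr a r)))
            else
              (case splay_even x lr of Leaf \<Rightarrow> Node l a r
               | Node A y B \<Rightarrow> Node (Node ll b A) y (Node B a r))))
     else
       (case r of Leaf \<Rightarrow> Node l a r
        | Node rl b rr \<Rightarrow>
           (if x = b then Node l a r
            else if b < x then
              (case splay_even x rr of Leaf \<Rightarrow> Node l a r
               | Node A y B \<Rightarrow> Node (Node (Node l a rl) b A) y B)
            else
              (case splay_even x rl of Leaf \<Rightarrow> Node l a r
               | Node A y B \<Rightarrow> Node (Node l a A) y (Node B b rr)))))"

text \<open>Sleator-Tarjan (bottom-up) splay: if the depth is odd, the final zig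
  step is performed at the root.\<close>
definition splay :: "nat \<Rightarrow> nat tree \<Rightarrow> nat tree" where
  "splay x t =
    (if even (dep t x) then splay_even x t
     else (case t of Leaf \<Rightarrow> Leaf
           | Node l a r \<Rightarrow>
              (if x < a then
                 (case splay_even x l of Leaf \<Rightarrow> t
                  | Node A y B \<Rightarrow> Node A y (Node B a r))
               else
                 (case splay_even x r of Leaf \<Rightarrow> t
                  | Node A y B \<Rightarrow> Node (Node l a A) y B))))"

text \<open>Cost of splaying x in t = number of rotations = depth of x in t.\<close>
definition splay_cost :: "nat \<Rightarrow> nat tree \<Rightarrow> nat" where
  "splay_cost x t = dep t x"

definition bst_on :: "nat \<Rightarrow> nat tree \<Rightarrow> bool" where
  "bst_on n t \<longleftrightarrow> bst t \<and> set_tree t = {1..n}"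

definition phi :: "nat \<Rightarrow> nat tree \<Rightarrow> nat tree \<Rightarrow> int" where
  "phi n R T = (\<Sum>i\<in>{1..n}. - 2 * int (Min ((dep R) ` set_tree (subtr T i))))"

end

theory Submission
  imports Defs
begin

text \<open>
  Write \<open>\<mu>(S)\<close> for the least depth in \<open>R\<close> of a key of \<open>S\<close>, so that the potential is
  \<open>-2\<close> times the sum of \<open>\<mu>\<close> over the key sets of all subtrees of \<open>T\<close>. These key sets are
  intervals of the keys of \<open>R\<close>, and in a BST two keys of equal depth always have a shallower key
  between them; hence an interval has a unique shallowest key, and of two disjoint nonempty
  subintervals of an interval \<open>S\<close> at least one has \<open>\<mu>\<close> strictly larger than \<open>\<mu>(S)\<close>.
  Every zig-zig or zig-zag step rearranges the subtree with key set \<open>S\<close> so that such a disjoint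
  pair appears among the subtrees involved; the resulting unit of potential pays for the two
  rotations, and the amortized cost of the step is at most \<open>6 (\<mu>(X) - \<mu>(S))\<close>, where \<open>X\<close> is
  the subtree of the splayed key before the step. A final zig has amortized cost at most
  \<open>1 + 2 (\<mu>(X) - \<mu>(S))\<close>. Telescoping bounds the amortized cost of the whole splay by
  \<open>1 + 6 (d\<^sub>R(i) - \<mu>(keys of T)) \<le> 6 (1 + d\<^sub>R(i))\<close>.
\<close>

lemma inorder_splay_even: "inorder (splay_even x t) = inorder t"
  by (induction x t rule: splay_even.induct) (auto split: tree.split)

lemma inorder_splay: "inorder (splay x t) = inorder t"
proof -
  have "inorder A @ y # inorder B = inorder s" if "splay_even x s = Node A y B" for s A y B
    using inorder_splay_even[of x s] that by simp
  then show ?thesis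
    unfolding splay_def by (auto simp: inorder_splay_even split: tree.split)
qed

lemma splay_even_root:
  "bst t \<Longrightarrow> x \<in> set_tree t \<Longrightarrow> even (dep t x) \<Longrightarrow> \<exists>A B. splay_even x t = Node A x B"
proof (induction x t rule: splay_even.induct)
  case (2 x l a r)
  consider "x = a" | "x < a" | "a < x" by linarith
  then show ?case
  proof cases
    case 2
    then obtain ll b lr where l: "l = Node ll b lr" using "2.prems"(1,2) by (cases l) auto
    with "2.prems" \<open>x < a\<close> consider "x < b" | "b < x" by (auto split: if_splits)
    then show ?thesis
    proof cases
      case 1
      with "2.IH"(1) "2.prems" \<open>x < a\<close> l obtain A B where "splay_even x ll = Node A x B" by fastforce
      with \<open>x < a\<close> 1 l show ?thesis by simp
    next
      case 2
      with "2.IH"(2) "2.prems" \<open>x < a\<close> l obtain A B where "splay_even x lr = Node A x B" by fastforce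
      with \<open>x < a\<close> 2 l show ?thesis by simp
    qed
  next
    case 3
    then obtain rl b rr where r: "r = Node rl b rr" using "2.prems"(1,2) by (cases r) auto
    with "2.prems" \<open>a < x\<close> consider "b < x" | "x < b" by (auto split: if_splits)
    then show ?thesis
    proof cases
      case 1
      with "2.IH"(3) "2.prems" \<open>a < x\<close> r obtain A B where "splay_even x rr = Node A x B" by fastforce
      with \<open>a < x\<close> 1 r show ?thesis by simp
    next
      case 2
      with "2.IH"(4) "2.prems" \<open>a < x\<close> r obtain A B where "splay_even x rl = Node A x B" by fastforce
      with \<open>a < x\<close> 2 r show ?thesis by simp
    qed
  qed simp
qed simp

lemma distinct_inorder_if_bst: "bst t \<Longrightarrow> distinct (inorder t)"
  by (simp add: bst_iff_sorted_wrt_less strict_sorted_iff)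

definition convex_in :: "nat tree \<Rightarrow> nat set \<Rightarrow> bool" where
  "convex_in R S \<longleftrightarrow> (\<forall>u\<in>S. \<forall>v\<in>S. \<forall>w\<in>set_tree R. u < w \<and> w < v \<longrightarrow> w \<in> S)"

definition interval_bst :: "nat tree \<Rightarrow> nat tree \<Rightarrow> bool" where
  "interval_bst R t \<longleftrightarrow> bst t \<and> set_tree t \<subseteq> set_tree R \<and> convex_in R (set_tree t)"

lemma interval_bst_subtrees:
  assumes "interval_bst R (Node l a r)"
  shows "interval_bst R l" "interval_bst R r"
proof -
  have l: "\<forall>y\<in>set_tree l. y < a" and r: "\<forall>y\<in>set_tree r. a < y"
    using assms by (auto simp: interval_bst_def)
  have between: "w \<in> set_tree (Node l a r)"
    if "u \<in> set_tree (Node l a r)" "v \<in> set_tree (Node l a r)" "w \<in> set_tree R" "u < w" "w < v"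
    for u v w using assms that unfolding interval_bst_def convex_in_def by blast
  have "convex_in R (set_tree l)" unfolding convex_in_def
  proof (intro ballI impI)
    fix u v w assume "u \<in> set_tree l" "v \<in> set_tree l" "w \<in> set_tree R" "u < w \<and> w < v"
    moreover from this l have "w < a" by force
    ultimately show "w \<in> set_tree l" using between[of u v w] r by auto
  qed
  moreover have "convex_in R (set_tree r)" unfolding convex_in_def
  proof (intro ballI impI)
    fix u v w assume "u \<in> set_tree r" "v \<in> set_tree r" "w \<in> set_tree R" "u < w \<and> w < v"
    moreover from this r have "a < w" by force
    ultimately show "w \<in> set_tree r" using between[of u v w] l by auto
  qed
  ultimately show "interval_bst R l" "interval_bst R r"
    using assms unfolding interval_bst_def by auto
qed

lemma bst_shallower_key_between:
  "bst R \<Longrightarrow> u \<in> set_tree R \<Longrightarrow> v \<in> set_tree R \<Longrightarrow> u < v \<Longrightarrow> dep R u = dep R v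
   \<Longrightarrow> \<exists>w\<in>set_tree R. u < w \<and> w < v \<and> dep R w < dep R u"
proof (induction R)
  case (Node l a r)
  have "u \<noteq> a" "v \<noteq> a"
    using Node.prems(4,5) by (auto split: if_splits)
  show ?case
  proof (cases "u < a \<and> a < v")
    case True
    then show ?thesis using \<open>u \<noteq> a\<close> by (intro bexI[of _ a]) auto
  next
    case False
    with Node.prems(4) \<open>u \<noteq> a\<close> \<open>v \<noteq> a\<close>
    consider "u < a" "v < a" | "a < u" "a < v" by fastforce
    then show ?thesis
    proof cases
      case 1
      with Node.IH(1) Node.prems obtain w where "w \<in> set_tree l" "u < w \<and> w < v \<and> dep l w < dep l u"
        by fastforce
      then show ?thesis using Node.prems(1) 1 by (intro bexI[of _ w]) auto
    next
      case 2
      with Node.IH(2) Node.prems obtain w where "w \<in> set_tree r" "u < w \<and> w < v \<and> dep r w < dep r u"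
        by fastforce
      then show ?thesis using Node.prems(1) 2 by (intro bexI[of _ w]) auto
    qed
  qed
qed simp

definition min_depth :: "nat tree \<Rightarrow> nat set \<Rightarrow> int" where
  "min_depth R S = int (Min (dep R ` S))"

lemma min_depth_le: "finite S \<Longrightarrow> u \<in> S \<Longrightarrow> min_depth R S \<le> int (dep R u)"
  unfolding min_depth_def by simp

lemma min_depth_antimono: "finite S \<Longrightarrow> P \<subseteq> S \<Longrightarrow> P \<noteq> {} \<Longrightarrow> min_depth R S \<le> min_depth R P"
  unfolding min_depth_def by (simp add: Min_antimono image_mono)

lemma min_depth_nonneg: "0 \<le> min_depth R S"
  unfolding min_depth_def by simp

lemma min_depth_attained: "finite S \<Longrightarrow> S \<noteq> {} \<Longrightarrow> \<exists>u\<in>S. int (dep R u) = min_depth R S"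
proof -
  assume "finite S" "S \<noteq> {}"
  then have "Min (dep R ` S) \<in> dep R ` S" by simp
  then show ?thesis unfolding min_depth_def by force
qed

lemma min_depth_lt_if_disjoint:
  assumes "bst R" "convex_in R S" "S \<subseteq> set_tree R"
    and "P \<subseteq> S" "Q \<subseteq> S" "P \<inter> Q = {}" "P \<noteq> {}" "Q \<noteq> {}"
  shows "min_depth R S < min_depth R P \<or> min_depth R S < min_depth R Q"
proof (rule ccontr)
  assume not_lt: "\<not> ?thesis"
  have fin: "finite S" using assms(3) by (rule finite_subset) simp
  have "min_depth R S \<le> min_depth R P" "min_depth R S \<le> min_depth R Q"
    using min_depth_antimono[OF fin] assms(4,5,7,8) by blast+
  with not_lt have "min_depth R P = min_depth R S" "min_depth R Q = min_depth R S"
    by linarith+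
  moreover obtain u where u: "u \<in> P" "int (dep R u) = min_depth R P"
    using min_depth_attained[OF finite_subset[OF assms(4) fin] assms(7)] by blast
  moreover obtain v where v: "v \<in> Q" "int (dep R v) = min_depth R Q"
    using min_depth_attained[OF finite_subset[OF assms(5) fin] assms(8)] by blast
  ultimately have depth: "int (dep R u) = min_depth R S" "dep R u = dep R v" by simp_all
  have in_S: "u \<in> S" "v \<in> S" and "u \<noteq> v" using u(1) v(1) assms(4-6) by blast+
  have shallower: "\<exists>w\<in>S. dep R w < dep R y"
    if yz: "y \<in> S" "z \<in> S" "y < z" "dep R y = dep R z" for y z
  proof -
    obtain w where w: "w \<in> set_tree R" "y < w" "w < z" "dep R w < dep R y"
      using bst_shallower_key_between[OF assms(1) _ _ yz(3,4)] yz(1,2) assms(3) by blast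
    with yz(1,2) assms(2) have "w \<in> S" unfolding convex_in_def by blast
    with w(4) show ?thesis by blast
  qed
  have "\<exists>w\<in>S. dep R w < dep R u"
  proof (cases "u < v")
    case True
    show ?thesis using shallower[OF in_S True depth(2)] .
  next
    case False
    with \<open>u \<noteq> v\<close> have "v < u" by simp
    show ?thesis using shallower[OF in_S(2,1) \<open>v < u\<close> depth(2)[symmetric]] unfolding depth(2) .
  qed
  then obtain w where "w \<in> S" "dep R w < dep R u" by blast
  then show False using min_depth_le[OF fin, of w R] depth(1) by linarith
qed

lemma double_rotation_bound:
  assumes "finite S" "X \<subseteq> M" "M \<subseteq> S" "X \<noteq> {}" "P \<subseteq> S" "Q \<subseteq> S" "P \<noteq> {}" "Q \<noteq> {}"
    and "min_depth R S < min_depth R P \<or> min_depth R S < min_depth R Q \<or> min_depth R S < min_depth R X"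
  shows "2 + 2 * min_depth R M + 2 * min_depth R X
    \<le> 2 * min_depth R P + 2 * min_depth R Q + 6 * (min_depth R X - min_depth R S)"
proof -
  have "finite M" "X \<subseteq> S" using assms(1-3) finite_subset by blast+
  then have "min_depth R S \<le> min_depth R P" "min_depth R S \<le> min_depth R Q"
    "min_depth R S \<le> min_depth R X" "min_depth R M \<le> min_depth R X"
    using min_depth_antimono[OF assms(1)] min_depth_antimono[of M] assms(2-8) by blast+
  with assms(9) show ?thesis unfolding right_diff_distrib by (elim disjE) linarith+
qed

fun potential :: "nat tree \<Rightarrow> nat tree \<Rightarrow> int" where
  "potential R Leaf = 0"
| "potential R (Node l a r) = potential R l + potential R r - 2 * min_depth R (set_tree (Node l a r))"

lemma sum_min_depth_subtr:
  "bst t \<Longrightarrow> (\<Sum>i\<in>set_tree t. - 2 * min_depth R (set_tree (subtr t i))) = potential R t"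
proof (induction t)
  case (Node l a r)
  let ?f = "\<lambda>t i. - 2 * min_depth R (set_tree (subtr t i))"
  have disjoint: "a \<notin> set_tree l \<union> set_tree r" "set_tree l \<inter> set_tree r = {}"
    using Node.prems by fastforce+
  have "(\<Sum>i\<in>set_tree l. ?f (Node l a r) i) = (\<Sum>i\<in>set_tree l. ?f l i)"
    "(\<Sum>i\<in>set_tree r. ?f (Node l a r) i) = (\<Sum>i\<in>set_tree r. ?f r i)"
    using Node.prems by (auto intro!: sum.cong)
  with disjoint Node show ?case by (simp add: sum.union_disjoint)
qed simp

lemma phi_eq_potential: "bst_on n T \<Longrightarrow> phi n R T = potential R T"
  unfolding phi_def bst_on_def using sum_min_depth_subtr[of T R] by (simp add: min_depth_def)

lemma zig_zig_left_amortized: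
  fixes s lr r A B :: "nat tree" and a b x :: nat and k d :: int
  defines "t \<equiv> Node (Node s b lr) a r"
  assumes "bst R" "interval_bst R t"
    and inorder: "inorder (Node A x B) = inorder s"
    and inner: "k + potential R (Node A x B) - potential R s \<le> 6 * (d - min_depth R (set_tree s))"
  shows "k + 2 + potential R (Node A x (Node B b (Node lr a r))) - potential R t
    \<le> 6 * (d - min_depth R (set_tree t))"
proof -
  have t: "bst t" "convex_in R (set_tree t)" "set_tree t \<subseteq> set_tree R"
    using assms(3) unfolding interval_bst_def by auto
  have X: "set_tree (Node A x B) = set_tree s" using inorder by (metis set_inorder)
  \<comment> \<open>The two subtrees created by a zig-zig are nested, so the disjoint pair is formed by
    the old subtree of \<open>x\<close> and the new subtree of \<open>a\<close>.\<close>
  have "min_depth R (set_tree t) < min_depth R (set_tree s)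
      \<or> min_depth R (set_tree t) < min_depth R (set_tree (Node lr a r))"
    by (rule min_depth_lt_if_disjoint[OF assms(2) t(2,3)])
      (use distinct_inorder_if_bst[OF t(1)] X in \<open>auto simp: t_def\<close>)
  then have "2 + 2 * min_depth R (set_tree (Node s b lr)) + 2 * min_depth R (set_tree s)
      \<le> 2 * min_depth R (set_tree (Node lr a r)) + 2 * min_depth R (set_tree (Node B b (Node lr a r)))
        + 6 * (min_depth R (set_tree s) - min_depth R (set_tree t))"
    by (intro double_rotation_bound) (use X in \<open>auto simp: t_def\<close>)
  moreover have "min_depth R (set_tree (Node A x (Node B b (Node lr a r)))) = min_depth R (set_tree t)"
    "min_depth R (set_tree (Node A x B)) = min_depth R (set_tree s)"
    using X by (auto simp: t_def intro!: arg_cong[where f = "min_depth R"])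
  ultimately show ?thesis
    using inner unfolding t_def potential.simps right_diff_distrib by linarith
qed

lemma zig_zag_left_amortized:
  fixes ll s r A B :: "nat tree" and a b x :: nat and k d :: int
  defines "t \<equiv> Node (Node ll b s) a r"
  assumes "bst R" "interval_bst R t"
    and inorder: "inorder (Node A x B) = inorder s"
    and inner: "k + potential R (Node A x B) - potential R s \<le> 6 * (d - min_depth R (set_tree s))"
  shows "k + 2 + potential R (Node (Node ll b A) x (Node B a r)) - potential R t
    \<le> 6 * (d - min_depth R (set_tree t))"
proof -
  have t: "bst t" "convex_in R (set_tree t)" "set_tree t \<subseteq> set_tree R"
    using assms(3) unfolding interval_bst_def by auto
  have X: "set_tree (Node A x B) = set_tree s" using inorder by (metis set_inorder)
  have "inorder (Node (Node ll b A) x (Node B a r)) = inorder t" by (simp add: t_def inorder[symmetric])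
  with distinct_inorder_if_bst[OF t(1)]
  have distinct: "distinct (inorder (Node (Node ll b A) x (Node B a r)))" by simp
  have "min_depth R (set_tree t) < min_depth R (set_tree (Node ll b A))
      \<or> min_depth R (set_tree t) < min_depth R (set_tree (Node B a r))"
    by (rule min_depth_lt_if_disjoint[OF assms(2) t(2,3)]) (use distinct X in \<open>auto simp: t_def\<close>)
  then have "2 + 2 * min_depth R (set_tree (Node ll b s)) + 2 * min_depth R (set_tree s)
      \<le> 2 * min_depth R (set_tree (Node ll b A)) + 2 * min_depth R (set_tree (Node B a r))
        + 6 * (min_depth R (set_tree s) - min_depth R (set_tree t))"
    by (intro double_rotation_bound) (use X in \<open>auto simp: t_def\<close>)
  moreover have "min_depth R (set_tree (Node (Node ll b A) x (Node B a r))) = min_depth R (set_tree t)"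
    "min_depth R (set_tree (Node A x B)) = min_depth R (set_tree s)"
    using X by (auto simp: t_def intro!: arg_cong[where f = "min_depth R"])
  ultimately show ?thesis
    using inner unfolding t_def potential.simps right_diff_distrib by linarith
qed

lemma zig_zig_right_amortized:
  fixes l rl s A B :: "nat tree" and a b x :: nat and k d :: int
  defines "t \<equiv> Node l a (Node rl b s)"
  assumes "bst R" "interval_bst R t"
    and inorder: "inorder (Node A x B) = inorder s"
    and inner: "k + potential R (Node A x B) - potential R s \<le> 6 * (d - min_depth R (set_tree s))"
  shows "k + 2 + potential R (Node (Node (Node l a rl) b A) x B) - potential R t
    \<le> 6 * (d - min_depth R (set_tree t))"
proof -
  have t: "bst t" "convex_in R (set_tree t)" "set_tree t \<subseteq> set_tree R"
    using assms(3) unfolding interval_bst_def by auto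
  have X: "set_tree (Node A x B) = set_tree s" using inorder by (metis set_inorder)
  have "min_depth R (set_tree t) < min_depth R (set_tree s)
      \<or> min_depth R (set_tree t) < min_depth R (set_tree (Node l a rl))"
    by (rule min_depth_lt_if_disjoint[OF assms(2) t(2,3)])
      (use distinct_inorder_if_bst[OF t(1)] X in \<open>auto simp: t_def\<close>)
  then have "2 + 2 * min_depth R (set_tree (Node rl b s)) + 2 * min_depth R (set_tree s)
      \<le> 2 * min_depth R (set_tree (Node l a rl)) + 2 * min_depth R (set_tree (Node (Node l a rl) b A))
        + 6 * (min_depth R (set_tree s) - min_depth R (set_tree t))"
    by (intro double_rotation_bound) (use X in \<open>auto simp: t_def\<close>)
  moreover have "min_depth R (set_tree (Node (Node (Node l a rl) b A) x B)) = min_depth R (set_tree t)"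
    "min_depth R (set_tree (Node A x B)) = min_depth R (set_tree s)"
    using X by (auto simp: t_def intro!: arg_cong[where f = "min_depth R"])
  ultimately show ?thesis
    using inner unfolding t_def potential.simps right_diff_distrib by linarith
qed

lemma zig_zag_right_amortized:
  fixes l s rr A B :: "nat tree" and a b x :: nat and k d :: int
  defines "t \<equiv> Node l a (Node s b rr)"
  assumes "bst R" "interval_bst R t"
    and inorder: "inorder (Node A x B) = inorder s"
    and inner: "k + potential R (Node A x B) - potential R s \<le> 6 * (d - min_depth R (set_tree s))"
  shows "k + 2 + potential R (Node (Node l a A) x (Node B b rr)) - potential R t
    \<le> 6 * (d - min_depth R (set_tree t))"
proof -
  have t: "bst t" "convex_in R (set_tree t)" "set_tree t \<subseteq> set_tree R"
    using assms(3) unfolding interval_bst_def by auto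
  have X: "set_tree (Node A x B) = set_tree s" using inorder by (metis set_inorder)
  have "inorder (Node (Node l a A) x (Node B b rr)) = inorder t" by (simp add: t_def inorder[symmetric])
  with distinct_inorder_if_bst[OF t(1)]
  have distinct: "distinct (inorder (Node (Node l a A) x (Node B b rr)))" by simp
  have "min_depth R (set_tree t) < min_depth R (set_tree (Node l a A))
      \<or> min_depth R (set_tree t) < min_depth R (set_tree (Node B b rr))"
    by (rule min_depth_lt_if_disjoint[OF assms(2) t(2,3)]) (use distinct X in \<open>auto simp: t_def\<close>)
  then have "2 + 2 * min_depth R (set_tree (Node s b rr)) + 2 * min_depth R (set_tree s)
      \<le> 2 * min_depth R (set_tree (Node l a A)) + 2 * min_depth R (set_tree (Node B b rr))
        + 6 * (min_depth R (set_tree s) - min_depth R (set_tree t))"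
    by (intro double_rotation_bound) (use X in \<open>auto simp: t_def\<close>)
  moreover have "min_depth R (set_tree (Node (Node l a A) x (Node B b rr))) = min_depth R (set_tree t)"
    "min_depth R (set_tree (Node A x B)) = min_depth R (set_tree s)"
    using X by (auto simp: t_def intro!: arg_cong[where f = "min_depth R"])
  ultimately show ?thesis
    using inner unfolding t_def potential.simps right_diff_distrib by linarith
qed

lemma zig_left_amortized:
  fixes s r A B :: "nat tree" and a x :: nat and k d :: int
  defines "t \<equiv> Node s a r"
  assumes inorder: "inorder (Node A x B) = inorder s"
    and inner: "k + potential R (Node A x B) - potential R s \<le> 6 * (d - min_depth R (set_tree s))"
  shows "k + 1 + potential R (Node A x (Node B a r)) - potential R t
    \<le> 1 + 6 * (d - min_depth R (set_tree t))"
proof -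
  have X: "set_tree (Node A x B) = set_tree s" using inorder by (metis set_inorder)
  have "min_depth R (set_tree t) \<le> min_depth R (set_tree s)"
    "min_depth R (set_tree t) \<le> min_depth R (set_tree (Node B a r))"
    using X by (auto simp: t_def intro!: min_depth_antimono)
  moreover have "min_depth R (set_tree (Node A x (Node B a r))) = min_depth R (set_tree t)"
    "min_depth R (set_tree (Node A x B)) = min_depth R (set_tree s)"
    using X by (auto simp: t_def intro!: arg_cong[where f = "min_depth R"])
  ultimately show ?thesis
    using inner unfolding t_def potential.simps right_diff_distrib by linarith
qed

lemma zig_right_amortized:
  fixes l s A B :: "nat tree" and a x :: nat and k d :: int
  defines "t \<equiv> Node l a s"
  assumes inorder: "inorder (Node A x B) = inorder s"
    and inner: "k + potential R (Node A x B) - potential R s \<le> 6 * (d - min_depth R (set_tree s))"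
  shows "k + 1 + potential R (Node (Node l a A) x B) - potential R t
    \<le> 1 + 6 * (d - min_depth R (set_tree t))"
proof -
  have X: "set_tree (Node A x B) = set_tree s" using inorder by (metis set_inorder)
  have "min_depth R (set_tree t) \<le> min_depth R (set_tree s)"
    "min_depth R (set_tree t) \<le> min_depth R (set_tree (Node l a A))"
    using X by (auto simp: t_def intro!: min_depth_antimono)
  moreover have "min_depth R (set_tree (Node (Node l a A) x B)) = min_depth R (set_tree t)"
    "min_depth R (set_tree (Node A x B)) = min_depth R (set_tree s)"
    using X by (auto simp: t_def intro!: arg_cong[where f = "min_depth R"])
  ultimately show ?thesis
    using inner unfolding t_def potential.simps right_diff_distrib by linarith
qed

lemma splay_even_left_amortized:
  assumes "bst R" "interval_bst R (Node l a r)" "x \<in> set_tree l" "odd (dep l x)"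
    and IH: "\<And>s. size s < size l \<Longrightarrow> interval_bst R s \<Longrightarrow> x \<in> set_tree s \<Longrightarrow> even (dep s x)
      \<Longrightarrow> int (dep s x) + potential R (splay_even x s) - potential R s
          \<le> 6 * (int (dep R x) - min_depth R (set_tree s))"
  shows "int (dep (Node l a r) x) + potential R (splay_even x (Node l a r)) - potential R (Node l a r)
    \<le> 6 * (int (dep R x) - min_depth R (set_tree (Node l a r)))"
proof -
  obtain ll b lr where l: "l = Node ll b lr" using assms(3) by (cases l) auto
  have bst: "bst (Node l a r)" using assms(2) unfolding interval_bst_def by simp
  have sub: "interval_bst R ll" "interval_bst R lr"
    using interval_bst_subtrees assms(2) unfolding l by blast+
  have "x < a" using bst assms(3) by auto
  consider (zig_zig) "x < b" | (zig_zag) "b < x"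
    using assms(4) l by (cases "x < b") (auto split: if_splits)
  then show ?thesis
  proof cases
    case zig_zig
    with bst assms(3,4) l have ll: "x \<in> set_tree ll" "even (dep ll x)" by auto
    obtain A B where AB: "splay_even x ll = Node A x B"
      using splay_even_root ll sub(1) unfolding interval_bst_def by blast
    with IH[of ll] ll sub(1) l have "int (dep ll x) + potential R (Node A x B) - potential R ll
        \<le> 6 * (int (dep R x) - min_depth R (set_tree ll))" by simp
    from zig_zig_left_amortized[OF assms(1) assms(2)[unfolded l]
        inorder_splay_even[of x ll, unfolded AB] this]
    show ?thesis using l zig_zig \<open>x < a\<close> AB by (simp add: algebra_simps)
  next
    case zig_zag
    with bst assms(3,4) l have lr: "x \<in> set_tree lr" "even (dep lr x)" by auto
    obtain A B where AB: "splay_even x lr = Node A x B"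
      using splay_even_root lr sub(2) unfolding interval_bst_def by blast
    with IH[of lr] lr sub(2) l have "int (dep lr x) + potential R (Node A x B) - potential R lr
        \<le> 6 * (int (dep R x) - min_depth R (set_tree lr))" by simp
    from zig_zag_left_amortized[OF assms(1) assms(2)[unfolded l]
        inorder_splay_even[of x lr, unfolded AB] this]
    show ?thesis using l zig_zag \<open>x < a\<close> AB by (simp add: algebra_simps)
  qed
qed

lemma splay_even_right_amortized:
  assumes "bst R" "interval_bst R (Node l a r)" "x \<in> set_tree r" "odd (dep r x)"
    and IH: "\<And>s. size s < size r \<Longrightarrow> interval_bst R s \<Longrightarrow> x \<in> set_tree s \<Longrightarrow> even (dep s x)
      \<Longrightarrow> int (dep s x) + potential R (splay_even x s) - potential R s
          \<le> 6 * (int (dep R x) - min_depth R (set_tree s))"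
  shows "int (dep (Node l a r) x) + potential R (splay_even x (Node l a r)) - potential R (Node l a r)
    \<le> 6 * (int (dep R x) - min_depth R (set_tree (Node l a r)))"
proof -
  obtain rl b rr where r: "r = Node rl b rr" using assms(3) by (cases r) auto
  have bst: "bst (Node l a r)" using assms(2) unfolding interval_bst_def by simp
  have sub: "interval_bst R rl" "interval_bst R rr"
    using interval_bst_subtrees assms(2) unfolding r by blast+
  have "a < x" using bst assms(3) by auto
  consider (zig_zig) "b < x" | (zig_zag) "x < b"
    using assms(4) r by (cases "b < x") (auto split: if_splits)
  then show ?thesis
  proof cases
    case zig_zig
    with bst assms(3,4) r have rr: "x \<in> set_tree rr" "even (dep rr x)" by auto
    obtain A B where AB: "splay_even x rr = Node A x B"
      using splay_even_root rr sub(2) unfolding interval_bst_def by blast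
    with IH[of rr] rr sub(2) r have "int (dep rr x) + potential R (Node A x B) - potential R rr
        \<le> 6 * (int (dep R x) - min_depth R (set_tree rr))" by simp
    from zig_zig_right_amortized[OF assms(1) assms(2)[unfolded r]
        inorder_splay_even[of x rr, unfolded AB] this]
    show ?thesis using r zig_zig \<open>a < x\<close> AB by (simp add: algebra_simps)
  next
    case zig_zag
    with bst assms(3,4) r have rl: "x \<in> set_tree rl" "even (dep rl x)" by auto
    obtain A B where AB: "splay_even x rl = Node A x B"
      using splay_even_root rl sub(1) unfolding interval_bst_def by blast
    with IH[of rl] rl sub(1) r have "int (dep rl x) + potential R (Node A x B) - potential R rl
        \<le> 6 * (int (dep R x) - min_depth R (set_tree rl))" by simp
    from zig_zag_right_amortized[OF assms(1) assms(2)[unfolded r]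
        inorder_splay_even[of x rl, unfolded AB] this]
    show ?thesis using r zig_zag \<open>a < x\<close> AB by (simp add: algebra_simps)
  qed
qed

lemma splay_even_amortized:
  assumes "bst R" "interval_bst R t" "x \<in> set_tree t" "even (dep t x)"
  shows "int (dep t x) + potential R (splay_even x t) - potential R t
    \<le> 6 * (int (dep R x) - min_depth R (set_tree t))"
  using assms(2-4)
proof (induction t rule: measure_induct_rule[where f = size])
  case (less t)
  then obtain l a r where t: "t = Node l a r" by (cases t) auto
  have bst: "bst t" using less.prems(1) unfolding interval_bst_def by simp
  consider (root) "x = a" | (left) "x \<in> set_tree l" "x < a" | (right) "x \<in> set_tree r" "a < x"
    using bst less.prems(2) t by auto
  then show ?case
  proof cases
    case root
    then show ?thesis using min_depth_le[OF finite_set_tree less.prems(2)] t by simp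
  next
    case left
    from less.IH show ?thesis unfolding t
      by (intro splay_even_left_amortized[OF assms(1) less.prems(1)[unfolded t] left(1)])
        (use less.prems(3) left in \<open>simp_all add: t\<close>)
  next
    case right
    from less.IH show ?thesis unfolding t
      by (intro splay_even_right_amortized[OF assms(1) less.prems(1)[unfolded t] right(1)])
        (use less.prems(3) right in \<open>simp_all add: t\<close>)
  qed
qed

lemma splay_amortized:
  assumes "bst R" "interval_bst R t" "x \<in> set_tree t"
  shows "int (dep t x) + potential R (splay x t) - potential R t
    \<le> 1 + 6 * (int (dep R x) - min_depth R (set_tree t))"
proof (cases "even (dep t x)")
  case True
  with splay_even_amortized[OF assms True] show ?thesis by (simp add: splay_def)
next
  case False
  then obtain l a r where t: "t = Node l a r" and "x \<noteq> a"
    using assms(3) by (cases t) (auto split: if_splits)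
  have bst: "bst t" using assms(2) unfolding interval_bst_def by simp
  have sub: "interval_bst R l" "interval_bst R r"
    using interval_bst_subtrees assms(2) unfolding t by blast+
  consider (zig_left) "x < a" | (zig_right) "a < x" using \<open>x \<noteq> a\<close> by linarith
  then show ?thesis
  proof cases
    case zig_left
    with False bst assms(3) t have l: "x \<in> set_tree l" "even (dep l x)" by auto
    obtain A B where AB: "splay_even x l = Node A x B"
      using splay_even_root l sub(1) unfolding interval_bst_def by blast
    from splay_even_amortized[OF assms(1) sub(1) l] AB
    have "int (dep l x) + potential R (Node A x B) - potential R l
        \<le> 6 * (int (dep R x) - min_depth R (set_tree l))" by simp
    from zig_left_amortized[OF inorder_splay_even[of x l, unfolded AB] this]
    show ?thesis using False t zig_left AB by (simp add: splay_def algebra_simps)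
  next
    case zig_right
    with False bst assms(3) t have r: "x \<in> set_tree r" "even (dep r x)" by auto
    obtain A B where AB: "splay_even x r = Node A x B"
      using splay_even_root r sub(2) unfolding interval_bst_def by blast
    from splay_even_amortized[OF assms(1) sub(2) r] AB
    have "int (dep r x) + potential R (Node A x B) - potential R r
        \<le> 6 * (int (dep R x) - min_depth R (set_tree r))" by simp
    from zig_right_amortized[OF inorder_splay_even[of x r, unfolded AB] this]
    show ?thesis using False t zig_right \<open>x \<noteq> a\<close> AB by (simp add: splay_def algebra_simps)
  qed
qed

theorem mainTheorem8:
  shows "\<exists>c::real. \<forall>(n::nat) R T (i::nat).
           bst_on n R \<longrightarrow> bst_on n T \<longrightarrow> i \<in> {1..n} \<longrightarrow>
           real (splay_cost i T) + real_of_int (phi n R (splay i T)) - real_of_int (phi n R T)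
             \<le> c * (1 + real (dep R i))"
proof (intro exI[of _ 6] allI impI)
  fix n R T i
  assume R: "bst_on n R" and T: "bst_on n T" and i: "i \<in> {1..n}"
  have T': "bst_on n (splay i T)"
    using T unfolding bst_on_def bst_iff_sorted_wrt_less by (metis inorder_splay set_inorder)
  have "int (dep T i) + potential R (splay i T) - potential R T
      \<le> 1 + 6 * (int (dep R i) - min_depth R (set_tree T))"
    using R T i by (intro splay_amortized) (auto simp: bst_on_def interval_bst_def convex_in_def)
  with min_depth_nonneg[of R "set_tree T"]
  have "int (splay_cost i T) + phi n R (splay i T) - phi n R T \<le> 6 * (1 + int (dep R i))"
    unfolding splay_cost_def phi_eq_potential[OF T] phi_eq_potential[OF T'] right_diff_distrib
      distrib_left by linarith
  then have "real_of_int (int (splay_cost i T) + phi n R (splay i T) - phi n R T)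
      \<le> real_of_int (6 * (1 + int (dep R i)))"
    by (simp only: of_int_le_iff)
  then show "real (splay_cost i T) + real_of_int (phi n R (splay i T)) - real_of_int (phi n R T)
      \<le> 6 * (1 + real (dep R i))"
    by simp
qed

end
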